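(* Every $n\times n$ Gram-Lorentz matrix $X$ is the Gram matrix of some vectors $\ell_1,\dots,\ell_n\in\mathcal{L}_{\mathrm{rank}(X)+2}$.
   Context: The $m$-dimensional Lorentz cone is $\mathcal{L}_m:=\{(c,x)\in\mathbb{R}\times\mathbb{R}^{m-1}: c\ge\|x\|\}$. An $n\times n$ real symmetric matrix $X$ is Gram-Lorentz if there exist $m\ge1$ and vectors $\ell_1,\dots,\ell_n\in\mathcal{L}_m$ with $X_{ij}=\langle\ell_i,\ell_j\rangle$ for all $i,j$. *)

theory Defs
  imports "HOL-Analysis.Analysis"
begin

text \<open>Vectors of R^m are represented as functions nat => real vanishing outside {..<m};
  coordinate 0 is the "c" coordinate, coordinates 1..m-1 form x.\<close>

definition in_Rm :: "nat \<Rightarrow> (nat \<Rightarrow> real) \<Rightarrow> bool" where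
  "in_Rm m v \<longleftrightarrow> (\<forall>i\<ge>m. v i = 0)"

definition lorentz_cone :: "nat \<Rightarrow> (nat \<Rightarrow> real) set" where
  "lorentz_cone m = {v. 1 \<le> m \<and> in_Rm m v \<and> sqrt (\<Sum>i\<in>{1..<m}. (v i)\<^sup>2) \<le> v 0}"

definition inner_Rm :: "nat \<Rightarrow> (nat \<Rightarrow> real) \<Rightarrow> (nat \<Rightarrow> real) \<Rightarrow> real" where
  "inner_Rm m u v = (\<Sum>i<m. u i * v i)"

definition gram_lorentz :: "real^'n^'n \<Rightarrow> bool" where
  "gram_lorentz X \<longleftrightarrow> transpose X = X \<and>
     (\<exists>m\<ge>1. \<exists>l :: 'n \<Rightarrow> nat \<Rightarrow> real. (\<forall>i. l i \<in> lorentz_cone m) \<and>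
        (\<forall>i j. X $ i $ j = inner_Rm m (l i) (l j)))"

end

theory Submission imports Defs begin

text \<open>Write \<open>l\<^sub>i = (c\<^sub>i, x\<^sub>i)\<close>. The spatial Gram matrix \<open>(x\<^sub>i \<bullet> x\<^sub>j)\<close> is the sum of the
  rank-one forms of the spatial columns of the factorisation, which lie in its column span, a space of
  dimension at most \<open>rank X\<close>. Peeling off one rank-one form at a time (Cholesky) rewrites such a sum
  with as many terms as that dimension, so the \<open>x\<^sub>i\<close> can be replaced by vectors with \<open>rank X + 1\<close>
  coordinates and the same Gram matrix, hence the same norms, while the time coordinates \<open>c\<^sub>i\<close> are kept.\<close>

lemma dim_less_if_orthogonal_in_span:
  fixes v :: "'a::euclidean_space"
  assumes "B \<subseteq> span A" "v \<in> span A" "v \<noteq> 0" "\<And>b. b \<in> B \<Longrightarrow> b \<bullet> v = 0"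
  shows "dim B < dim A"
proof -
  have "subspace {x. x \<bullet> v = 0}" by (simp add: subspace_def inner_add_left)
  then have "span B \<subseteq> span A \<inter> {x. x \<bullet> v = 0}"
    using assms(1,4) by (intro span_minimal subspace_inter[OF subspace_span]) auto
  moreover have "v \<notin> span A \<inter> {x. x \<bullet> v = 0}" using assms(3) by simp
  ultimately have "span B \<subset> span A" using assms(2) span_base by blast
  then show ?thesis by (rule dim_psubset)
qed

text \<open>One step of a Cholesky factorisation: subtracting the rank-one form of the normalised
  image \<open>t\<close> of a vector \<open>v = f k0\<close> leaves a form whose vectors are all orthogonal to \<open>v\<close>.\<close>

lemma rank_one_sum_split_off:
  fixes f :: "nat \<Rightarrow> 'a::euclidean_space"
  assumes "k0 < p" "f k0 \<noteq> 0"
  obtains t f'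
  where "\<And>a b. (\<Sum>k<p. (f k \<bullet> a) * (f k \<bullet> b)) = (t \<bullet> a) * (t \<bullet> b) + (\<Sum>k<p. (f' k \<bullet> a) * (f' k \<bullet> b))"
    and "dim (f' ` {..<p}) < dim (f ` {..<p})"
proof -
  define v where "v = f k0"
  define Q where "Q a b = (\<Sum>k<p. (f k \<bullet> a) * (f k \<bullet> b))" for a b
  have "0 < (f k0 \<bullet> v) * (f k0 \<bullet> v)" using assms(2) v_def by simp
  also have "\<dots> \<le> Q v v"
    unfolding Q_def by (rule member_le_sum) (use assms(1) in auto)
  finally have Qvv: "Q v v > 0" .
  define s where "s = sqrt (Q v v)"
  have s: "s > 0" "s * s = Q v v" using Qvv by (auto simp: s_def)
  define \<beta> where "\<beta> k = (f k \<bullet> v) / s" for k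
  define t where "t = (\<Sum>k<p. \<beta> k *\<^sub>R f k)"
  define f' where "f' k = f k - \<beta> k *\<^sub>R t" for k
  have t_inner: "t \<bullet> a = (\<Sum>k<p. \<beta> k * (f k \<bullet> a))" for a
    by (simp add: t_def inner_sum_left)
  have \<beta>_norm: "(\<Sum>k<p. \<beta> k * \<beta> k) = 1"
    using s Qvv by (simp add: \<beta>_def Q_def sum_divide_distrib[symmetric])
  have "t \<bullet> v = s"
    using s by (simp add: t_inner \<beta>_def Q_def sum_divide_distrib[symmetric] field_simps)
  then have f'_orth: "f' k \<bullet> v = 0" for k
    using s by (simp add: f'_def inner_diff_left \<beta>_def)
  have "t \<in> span (f ` {..<p})"
    unfolding t_def by (intro span_sum span_mul span_base) auto
  then have "f' ` {..<p} \<subseteq> span (f ` {..<p})"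
    unfolding f'_def by (auto intro: span_diff span_mul span_base)
  moreover have "v \<in> span (f ` {..<p})" using assms(1) v_def by (auto intro: span_base)
  ultimately have dim_less: "dim (f' ` {..<p}) < dim (f ` {..<p})"
    using assms(2) f'_orth v_def by (intro dim_less_if_orthogonal_in_span) auto
  have split_off: "(\<Sum>k<p. (f k \<bullet> a) * (f k \<bullet> b)) =
      (t \<bullet> a) * (t \<bullet> b) + (\<Sum>k<p. (f' k \<bullet> a) * (f' k \<bullet> b))" for a b
  proof -
    have "(\<Sum>k<p. (f' k \<bullet> a) * (f' k \<bullet> b)) =
          Q a b - (t \<bullet> b) * (\<Sum>k<p. \<beta> k * (f k \<bullet> a))
           - (t \<bullet> a) * (\<Sum>k<p. \<beta> k * (f k \<bullet> b)) + (t \<bullet> a) * (t \<bullet> b) * (\<Sum>k<p. \<beta> k * \<beta> k)"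
      by (simp add: Q_def f'_def inner_diff_left algebra_simps sum.distrib sum_subtractf
          sum_distrib_left)
    then show ?thesis using t_inner \<beta>_norm by (simp add: Q_def)
  qed
  show ?thesis by (rule that[OF split_off dim_less])
qed

lemma rank_one_sum_reduce:
  fixes f :: "nat \<Rightarrow> 'a::euclidean_space"
  assumes "dim (f ` {..<p}) \<le> N"
  shows "\<exists>g. \<forall>a b. (\<Sum>k<N. (g k \<bullet> a) * (g k \<bullet> b)) = (\<Sum>k<p. (f k \<bullet> a) * (f k \<bullet> b))"
  using assms
proof (induction "dim (f ` {..<p})" arbitrary: f N rule: less_induct)
  case less
  show ?case
  proof (cases "\<forall>k<p. f k = 0")
    case True
    then show ?thesis by (intro exI[of _ "\<lambda>_. 0"]) simp
  next
    case False
    then obtain k0 where "k0 < p" "f k0 \<noteq> 0" by auto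
    then obtain t f' where split: "\<And>a b. (\<Sum>k<p. (f k \<bullet> a) * (f k \<bullet> b))
                       = (t \<bullet> a) * (t \<bullet> b) + (\<Sum>k<p. (f' k \<bullet> a) * (f' k \<bullet> b))"
      and dim_f': "dim (f' ` {..<p}) < dim (f ` {..<p})"
      by (rule rank_one_sum_split_off[of k0 p f]) blast
    have "N \<noteq> 0" using dim_f' less.prems by linarith
    then obtain M where N: "N = Suc M" using not0_implies_Suc by blast
    then have "dim (f' ` {..<p}) \<le> M" using dim_f' less.prems by linarith
    then obtain g where g: "\<And>a b. (\<Sum>k<M. (g k \<bullet> a) * (g k \<bullet> b)) = (\<Sum>k<p. (f' k \<bullet> a) * (f' k \<bullet> b))"
      using less.hyps[OF dim_f'] by blast
    define g' where "g' k = (if k = 0 then t else g (k - 1))" for k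
    have "(\<Sum>k<N. (g' k \<bullet> a) * (g' k \<bullet> b)) = (\<Sum>k<p. (f k \<bullet> a) * (f k \<bullet> b))" for a b
      unfolding N sum.lessThan_Suc_shift by (simp add: g'_def g split)
    then show ?thesis by blast
  qed
qed

text \<open>The column span of a Gram factorisation \<open>X = V V\<^sup>T\<close> maps injectively under \<open>X\<close>,
  since \<open>X a = 0\<close> forces \<open>a\<^sup>T X a = \<Sum>k (v k \<bullet> a)\<^sup>2 = 0\<close>.\<close>

lemma gram_factor_dim_le_rank:
  fixes X :: "real^'n^'n" and v :: "nat \<Rightarrow> real^'n"
  assumes X: "\<And>i j. X $ i $ j = (\<Sum>k<m. v k $ i * v k $ j)"
  shows "dim (v ` {..<m}) \<le> rank X"
proof -
  have Xv: "X *v a = (\<Sum>k<m. (v k \<bullet> a) *\<^sub>R v k)" for a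
    by (simp add: vec_eq_iff matrix_vector_mult_def X inner_vec_def sum_component
        sum_distrib_left sum_distrib_right sum.swap[of _ UNIV] algebra_simps)
  have kernel_orth: "v k \<bullet> a = 0" if "X *v a = 0" "k < m" for a k
  proof -
    have "(\<Sum>k<m. (v k \<bullet> a) * (v k \<bullet> a)) = a \<bullet> (X *v a)"
      by (simp add: Xv inner_sum_right inner_commute)
    then have "(\<Sum>k<m. (v k \<bullet> a) * (v k \<bullet> a)) = 0" using that(1) by simp
    then have "\<forall>k\<in>{..<m}. (v k \<bullet> a) * (v k \<bullet> a) = 0"
      by (subst (asm) sum_nonneg_eq_0_iff) auto
    then show ?thesis using that(2) by auto
  qed
  have "inj_on ((*v) X) (span (v ` {..<m}))"
  proof (rule inj_onI)
    fix x y assume xy: "x \<in> span (v ` {..<m})" "y \<in> span (v ` {..<m})" "X *v x = X *v y"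
    then have "X *v (x - y) = 0" by (simp add: matrix_vector_mult_diff_distrib)
    then have "orthogonal (x - y) w" if "w \<in> v ` {..<m}" for w
      using kernel_orth that by (auto simp: orthogonal_def inner_commute[of "x - y"])
    moreover have "x - y \<in> span (v ` {..<m})" using xy by (simp add: span_diff)
    ultimately have "orthogonal (x - y) (x - y)" by (rule orthogonal_to_span[rotated])
    then show "x = y" by (simp add: orthogonal_def)
  qed
  then have "dim (v ` {..<m}) = dim ((*v) X ` v ` {..<m})"
    by (intro dim_image_eq[symmetric]) (auto simp: matrix_vector_mul_linear)
  also have "\<dots> \<le> dim (range ((*v) X))" by (rule dim_subset) auto
  finally show ?thesis by (simp add: rank_dim_range)
qed

definition lorentz_vec :: "nat \<Rightarrow> real \<Rightarrow> (nat \<Rightarrow> real) \<Rightarrow> nat \<Rightarrow> real" where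
  "lorentz_vec d c x k = (if k = 0 then c else if k \<le> d then x (k - 1) else 0)"

lemma lorentz_vec_eta:
  assumes "in_Rm (Suc d) v"
  shows "lorentz_vec d (v 0) (\<lambda>k. v (Suc k)) = v"
  using assms by (auto simp: fun_eq_iff lorentz_vec_def in_Rm_def)

lemma inner_Rm_lorentz_vec:
  "inner_Rm (Suc d) (lorentz_vec d c x) (lorentz_vec d c' y) = c * c' + (\<Sum>k<d. x k * y k)"
  unfolding inner_Rm_def by (subst sum.lessThan_Suc_shift) (simp add: lorentz_vec_def)

lemma lorentz_vec_in_cone_iff:
  "lorentz_vec d c x \<in> lorentz_cone (Suc d) \<longleftrightarrow> sqrt (\<Sum>k<d. (x k)\<^sup>2) \<le> c"
proof -
  have "(\<Sum>k\<in>{1..<Suc d}. (lorentz_vec d c x k)\<^sup>2) = (\<Sum>k<d. (lorentz_vec d c x (Suc k))\<^sup>2)"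
    using sum.shift_bounds_Suc_ivl[of "\<lambda>k. (lorentz_vec d c x k)\<^sup>2" 0 d]
    by (simp add: atLeast0LessThan)
  also have "\<dots> = (\<Sum>k<d. (x k)\<^sup>2)" by (simp add: lorentz_vec_def)
  finally have sq: "(\<Sum>k\<in>{1..<Suc d}. (lorentz_vec d c x k)\<^sup>2) = (\<Sum>k<d. (x k)\<^sup>2)" .
  show ?thesis
    unfolding lorentz_cone_def mem_Collect_eq sq by (simp add: in_Rm_def lorentz_vec_def)
qed

theorem lemma4p7:
  fixes X :: "real^'n^'n"
  assumes "gram_lorentz X"
  shows "\<exists>l :: 'n \<Rightarrow> nat \<Rightarrow> real. (\<forall>i. l i \<in> lorentz_cone (rank X + 2)) \<and>
           (\<forall>i j. X $ i $ j = inner_Rm (rank X + 2) (l i) (l j))"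
proof -
  obtain m l where "m \<ge> 1" and cone: "\<And>i. l i \<in> lorentz_cone m"
    and X: "\<And>i j. X $ i $ j = inner_Rm m (l i) (l j)"
    using assms unfolding gram_lorentz_def by blast
  then obtain d where m: "m = Suc d" using not0_implies_Suc by fastforce
  define x where "x i = (\<lambda>k. l i (Suc k))" for i
  have l: "l i = lorentz_vec d (l i 0) (x i)" for i
    using cone[of i] lorentz_vec_eta[of d "l i"] by (simp add: m x_def lorentz_cone_def)
  have "dim ((\<lambda>k. \<chi> i. x i k) ` {..<d}) \<le> dim ((\<lambda>k. \<chi> i. l i k) ` {..<m})"
    by (rule dim_subset) (auto simp: m x_def)
  also have "\<dots> \<le> rank X"
    by (rule gram_factor_dim_le_rank) (simp add: X inner_Rm_def)
  finally have "dim ((\<lambda>k. \<chi> i. x i k) ` {..<d}) \<le> rank X + 1" by simp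
  then obtain g :: "nat \<Rightarrow> real^'n" where
    g: "\<And>a b. (\<Sum>k<rank X + 1. (g k \<bullet> a) * (g k \<bullet> b)) = (\<Sum>k<d. ((\<chi> i. x i k) \<bullet> a) * ((\<chi> i. x i k) \<bullet> b))"
    using rank_one_sum_reduce[of "\<lambda>k. \<chi> i. x i k" d "rank X + 1"] by blast
  have spatial: "(\<Sum>k<rank X + 1. g k $ i * g k $ j) = (\<Sum>k<d. x i k * x j k)" for i j
    using g[of "axis i 1" "axis j 1"] by (simp add: inner_axis)
  define l' where "l' i = lorentz_vec (rank X + 1) (l i 0) (\<lambda>k. g k $ i)" for i
  have "l' i \<in> lorentz_cone (Suc (rank X + 1))" for i
    using cone[of i] spatial[of i i]
    by (subst (asm) l) (simp only: l'_def lorentz_vec_in_cone_iff m power2_eq_square)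
  moreover have "X $ i $ j = inner_Rm (Suc (rank X + 1)) (l' i) (l' j)" for i j
    by (subst X, subst (1 2) l) (simp only: m l'_def inner_Rm_lorentz_vec spatial)
  ultimately show ?thesis by (intro exI[of _ l']) simp
qed

end
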